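(* Let $k\ge3$ and let $(G,c)$ be the planar $2k$-terminal grid network defined as follows: non-terminal vertices $u_{i,j}$ for $1\le i,j\le k$; terminals $v_1,\dots,v_k,h_1,\dots,h_k$, with $v_j$ adjacent only to $u_{1,j}$ and $h_i$ adjacent only to $u_{i,1}$; grid edges $u_{i,j}u_{i+1,j}$ ($1\le i\le k-1$, $1\le j\le k$) and $u_{i,j}u_{i,j+1}$ ($1\le i\le k$, $1\le j\le k-1$). Costs: terminal edges cost $k^4$; edges $u_{i,k}u_{i+1,k}$ and $u_{k,j}u_{k,j+1}$ cost $k^4$; edges $u_{i,j}u_{i+1,j}$ with $i,j\le k-1$ cost $1$; edges $u_{i,j}u_{i,j+1}$ with $i,j\le k-1$ cost $1-j/k^4$. Let $A_G$ be a cutset-edge incidence matrix of $(G,c)$. Then $\mathrm{rank}(A_G)\ge (k-1)^2$.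
   Context: The terminal set is $Q=\{v_1,\dots,v_k,h_1,\dots,h_k\}$ (so there are $2k$ terminals). A cut $(W,V(G)\setminus W)$ is $S$-separating if $W\cap Q\in\{S,Q\setminus S\}$; its cutset is the set of edges with exactly one endpoint in $W$ and its cost is the total cost of the cutset. Cutset-edge incidence matrix: fix an enumeration $S_1,\dots,S_m$, $m=2^{2k-1}-1$, of representatives of the distinct nontrivial bipartitions of $Q$, and for each a minimum-cost $S_t$-separating cut (ties broken arbitrarily); $A_G\in\{0,1\}^{m\times E(G)}$ has entry $(t,e)$ equal to $1$ iff $e$ lies in the cutset of the chosen cut for $S_t$. *)

theory Defs
  imports Main "Jordan_Normal_Form.DL_Rank"
begin

text \<open>Vertices of the grid network: U i j = u_{i,j}, V j = v_j, H i = h_i (1-based indices).\<close>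
datatype vert = U nat nat | V nat | H nat

definition grid_vertices :: "nat \<Rightarrow> vert set" where
  "grid_vertices k = {U i j | i j. 1 \<le> i \<and> i \<le> k \<and> 1 \<le> j \<and> j \<le> k}
     \<union> {V j | j. 1 \<le> j \<and> j \<le> k} \<union> {H i | i. 1 \<le> i \<and> i \<le> k}"

definition terminals :: "nat \<Rightarrow> vert set" where
  "terminals k = {V j | j. 1 \<le> j \<and> j \<le> k} \<union> {H i | i. 1 \<le> i \<and> i \<le> k}"

definition grid_edges :: "nat \<Rightarrow> vert set set" where
  "grid_edges k =
      {{V j, U 1 j} | j. 1 \<le> j \<and> j \<le> k}
    \<union> {{H i, U i 1} | i. 1 \<le> i \<and> i \<le> k}
    \<union> {{U i j, U (Suc i) j} | i j. 1 \<le> i \<and> i \<le> k - 1 \<and> 1 \<le> j \<and> j \<le> k}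
    \<union> {{U i j, U i (Suc j)} | i j. 1 \<le> i \<and> i \<le> k \<and> 1 \<le> j \<and> j \<le> k - 1}"

definition grid_cost :: "nat \<Rightarrow> vert set \<Rightarrow> real" where
  "grid_cost k e =
     (if (\<exists>j. e = {V j, U 1 j}) \<or> (\<exists>i. e = {H i, U i 1})
         \<or> (\<exists>i. e = {U i k, U (Suc i) k}) \<or> (\<exists>j. e = {U k j, U k (Suc j)})
      then real k ^ 4
      else if (\<exists>i j. e = {U i j, U (Suc i) j}) then 1
      else (THE x. \<exists>i j. e = {U i j, U i (Suc j)} \<and> x = 1 - real j / real k ^ 4))"

definition cutset :: "nat \<Rightarrow> vert set \<Rightarrow> vert set set" where
  "cutset k W = {e \<in> grid_edges k. card (e \<inter> W) = 1}"

definition cut_cost :: "nat \<Rightarrow> vert set \<Rightarrow> real" where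
  "cut_cost k W = (\<Sum>e\<in>cutset k W. grid_cost k e)"

definition separating :: "nat \<Rightarrow> vert set \<Rightarrow> vert set \<Rightarrow> bool" where
  "separating k S W \<longleftrightarrow> W \<subseteq> grid_vertices k \<and>
     (W \<inter> terminals k = S \<or> W \<inter> terminals k = terminals k - S)"

definition min_sep_cut :: "nat \<Rightarrow> vert set \<Rightarrow> vert set \<Rightarrow> bool" where
  "min_sep_cut k S W \<longleftrightarrow> separating k S W \<and>
     (\<forall>W'. separating k S W' \<longrightarrow> cut_cost k W \<le> cut_cost k W')"

definition nparts :: "nat \<Rightarrow> nat" where
  "nparts k = 2 ^ (2 * k - 1) - 1"

text \<open>Ss 0, ..., Ss (m-1) are representatives of the distinct nontrivial bipartitions of Q.\<close>
definition bipartition_enum :: "nat \<Rightarrow> (nat \<Rightarrow> vert set) \<Rightarrow> bool" where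
  "bipartition_enum k Ss \<longleftrightarrow>
     (\<forall>t < nparts k. Ss t \<subseteq> terminals k \<and> Ss t \<noteq> {} \<and> Ss t \<noteq> terminals k) \<and>
     (\<forall>t < nparts k. \<forall>t' < nparts k. t \<noteq> t' \<longrightarrow>
         Ss t \<noteq> Ss t' \<and> Ss t \<noteq> terminals k - Ss t') \<and>
     (\<forall>S. S \<subseteq> terminals k \<and> S \<noteq> {} \<and> S \<noteq> terminals k \<longrightarrow>
         (\<exists>t < nparts k. Ss t = S \<or> Ss t = terminals k - S))"

definition incidence_mat :: "nat \<Rightarrow> (nat \<Rightarrow> vert set) \<Rightarrow> vert set list \<Rightarrow> real mat" where
  "incidence_mat k W es =
     mat (nparts k) (length es) (\<lambda>(t, j). if es ! j \<in> cutset k (W t) then 1 else 0)"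

end

theory Submission
  imports Defs "Jordan_Normal_Form.DL_Rank_Submatrix"
begin

text \<open>
  For 1 \<le> a, b \<le> k-1 let S_{a,b} = {h_1..h_a, v_1..v_b}.  The rectangle
  cut around u_{1,1} separating S_{a,b} cuts exactly the "corner"
  {u_{i,b}u_{i,b+1} | i \<le> a} \<union> {u_{a,j}u_{a+1,j} | j \<le> b} and costs b + a(1 - b/k^4).
  Conversely, a cut of at most this cost cannot cut a heavy edge, so the boundary of the
  grid is fixed; hence each of the first a rows and b columns is cut, and the cost bound
  leaves room for nothing else: the cutset is a staircase with one edge per such row and
  column.  The row edges must sit in column b (weights 1 - j/k^4 punish cutting further
  left), and then the column edges sit in row a.  So every minimum S_{a,b}-separating cut
  has the corner as its cutset.  In the incidence matrix, the rows for the (k-1)^2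
  bipartitions S_{a,b} and the columns of the edges u_{a,b}u_{a+1,b} form a block diagonal
  matrix with lower triangular all-one blocks, which is nonsingular.
\<close>

lemma positions_in_image:
  fixes \<gamma> :: "'p \<Rightarrow> nat"
  assumes fin: "finite P" and inj: "inj_on \<gamma> P"
  shows "bij_betw (\<lambda>q. card {a \<in> \<gamma> ` P. a < \<gamma> q}) P {..<card P}"
    and "q \<in> P \<Longrightarrow> pick (\<gamma> ` P) (card {a \<in> \<gamma> ` P. a < \<gamma> q}) = \<gamma> q"
proof -
  let ?J = "\<gamma> ` P" and ?h = "\<lambda>q. card {a \<in> \<gamma> ` P. a < \<gamma> q}"
  have pick: "pick ?J (?h q) = \<gamma> q" if "q \<in> P" for q
    using that by (intro pick_card_in_set) simp
  then show "q \<in> P \<Longrightarrow> pick ?J (?h q) = \<gamma> q" .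
  have lt: "?h q < card P" if q: "q \<in> P" for q
  proof -
    have "\<gamma> q \<in> ?J - {a \<in> ?J. a < \<gamma> q}" using q less_irrefl by blast
    then have "{a \<in> ?J. a < \<gamma> q} \<subset> ?J" by blast
    then have "card {a \<in> ?J. a < \<gamma> q} < card ?J" using fin by (meson finite_imageI psubset_card_mono)
    then show ?thesis by (simp only: card_image[OF inj])
  qed
  have h_inj: "inj_on ?h P"
  proof (rule inj_onI)
    fix p q assume p: "p \<in> P" and q: "q \<in> P" and same: "?h p = ?h q"
    have "\<gamma> p = pick ?J (?h p)" using pick[OF p] by (rule sym)
    also have "\<dots> = \<gamma> q" unfolding same by (rule pick[OF q])
    finally show "p = q" using inj p q by (simp add: inj_on_eq_iff)
  qed
  moreover have "?h ` P = {..<card P}"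
  proof (rule card_subset_eq)
    show "?h ` P \<subseteq> {..<card P}" using lt by blast
    show "card (?h ` P) = card {..<card P}" using card_image[OF h_inj] by simp
  qed simp
  ultimately show "bij_betw ?h P {..<card P}" unfolding bij_betw_def by blast
qed

lemma rank_ge_nonsingular_subsystem:
  fixes A :: "real mat" and P :: "'p set" and \<rho> \<gamma> :: "'p \<Rightarrow> nat"
  assumes A: "A \<in> carrier_mat n nc" and fin: "finite P"
    and \<rho>: "inj_on \<rho> P" "\<rho> ` P \<subseteq> {..<n}" and \<gamma>: "inj_on \<gamma> P" "\<gamma> ` P \<subseteq> {..<nc}"
    and trivial: "\<And>x. (\<forall>p\<in>P. (\<Sum>q\<in>P. A $$ (\<rho> p, \<gamma> q) * x q) = 0) \<Longrightarrow> \<forall>q\<in>P. x q = 0"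
  shows "card P \<le> vec_space.rank n A"
proof -
  define I where "I = \<rho> ` P"
  define J where "J = \<gamma> ` P"
  define r where "r = card P"
  define row where "row p = card {a \<in> I. a < \<rho> p}" for p
  define col where "col q = card {a \<in> J. a < \<gamma> q}" for q
  have row: "bij_betw row P {..<r}" "\<And>p. p \<in> P \<Longrightarrow> pick I (row p) = \<rho> p"
    using positions_in_image[OF fin \<rho>(1)] unfolding row_def I_def r_def by simp_all
  have col: "bij_betw col P {..<r}" "\<And>q. q \<in> P \<Longrightarrow> pick J (col q) = \<gamma> q"
    using positions_in_image[OF fin \<gamma>(1)] unfolding col_def J_def r_def by simp_all
  have rows: "{i. i < dim_row A \<and> i \<in> I} = I"
    using \<rho>(2) carrier_matD(1)[OF A] unfolding I_def by blast
  have cols: "{j. j < dim_col A \<and> j \<in> J} = J"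
    using \<gamma>(2) carrier_matD(2)[OF A] unfolding J_def by blast
  have cI: "card I = r" and cJ: "card J = r"
    unfolding I_def J_def r_def using card_image[OF \<rho>(1)] card_image[OF \<gamma>(1)] by simp_all
  define M where "M = submatrix A I J"
  have M: "M \<in> carrier_mat r r"
    unfolding M_def by (rule carrier_matI; unfold dim_submatrix rows cols cI cJ; rule refl)
  have M_index: "i < r \<Longrightarrow> j < r \<Longrightarrow> M $$ (i, j) = A $$ (pick I i, pick J j)" for i j
    unfolding M_def by (rule submatrix_index; unfold rows cols cI cJ)
  have "det M \<noteq> 0"
  proof
    assume "det M = 0"
    then obtain v where v: "v \<in> carrier_vec r" "v \<noteq> 0\<^sub>v r" "M *\<^sub>v v = 0\<^sub>v r"
      using det_0_iff_vec_prod_zero_field[OF M] by blast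
    have "(\<Sum>q\<in>P. A $$ (\<rho> p, \<gamma> q) * v $ col q) = 0" if p: "p \<in> P" for p
    proof -
      have i: "row p < r" using row(1) p by (auto simp: bij_betw_def)
      have "0 = (M *\<^sub>v v) $ row p" using v(3) i by simp
      also have "\<dots> = (\<Sum>c<r. M $$ (row p, c) * v $ c)"
        using M v(1) i by (simp add: mult_mat_vec_def scalar_prod_def atLeast0LessThan)
      also have "\<dots> = (\<Sum>c<r. A $$ (\<rho> p, pick J c) * v $ c)"
        using M_index i row(2)[OF p] by simp
      also have "\<dots> = (\<Sum>q\<in>P. A $$ (\<rho> p, pick J (col q)) * v $ col q)"
        by (rule sum.reindex_bij_betw[OF col(1), symmetric])
      also have "\<dots> = (\<Sum>q\<in>P. A $$ (\<rho> p, \<gamma> q) * v $ col q)"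
        using col(2) by simp
      finally show ?thesis by simp
    qed
    then have zero: "\<forall>q\<in>P. v $ col q = 0" using trivial[of "\<lambda>q. v $ col q"] by blast
    have "v = 0\<^sub>v r"
    proof (rule eq_vecI)
      fix c assume c: "c < dim_vec (0\<^sub>v r)"
      then obtain q where "q \<in> P" "c = col q"
        using col(1) unfolding bij_betw_def by (metis index_zero_vec(2) imageE lessThan_iff)
      then show "v $ c = 0\<^sub>v r $ c" using zero c by simp
    qed (use v(1) in simp)
    with v(2) show False by simp
  qed
  then have "card {j. j < nc \<and> j \<in> J} \<le> vec_space.rank n A"
    using vec_space.rank_gt_minor[OF A] unfolding M_def by blast
  then show ?thesis using cols cJ A unfolding r_def by simp
qed

lemma prefix_sums_zero:
  fixes x :: "nat \<Rightarrow> real"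
  assumes sums: "\<And>b. 1 \<le> b \<Longrightarrow> b \<le> n \<Longrightarrow> (\<Sum>c=1..b. x c) = 0"
    and "1 \<le> b" "b \<le> n"
  shows "x b = 0"
proof (cases "b = 1")
  case True
  then show ?thesis using sums[of 1] assms(3) by simp
next
  case False
  then obtain c where c: "b = Suc c" "1 \<le> c" using assms(2) by (cases b) auto
  have "(\<Sum>c=1..Suc c. x c) = (\<Sum>c=1..c. x c) + x (Suc c)" by (simp add: sum.cl_ivl_Suc)
  then show ?thesis using sums[of b] sums[of c] c assms(3) by simp
qed

lemma rank_ge_triangular_blocks:
  fixes A :: "real mat" and m m' :: nat and \<rho> \<gamma> :: "nat \<times> nat \<Rightarrow> nat"
  defines "P \<equiv> {1..m} \<times> {1..m'}"
  assumes A: "A \<in> carrier_mat n nc"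
    and \<rho>: "\<rho> ` P \<subseteq> {..<n}" and \<gamma>: "inj_on \<gamma> P" "\<gamma> ` P \<subseteq> {..<nc}"
    and entries: "\<And>p q. p \<in> P \<Longrightarrow> q \<in> P \<Longrightarrow>
       A $$ (\<rho> p, \<gamma> q) = (if fst q = fst p \<and> snd q \<le> snd p then 1 else 0)"
  shows "m * m' \<le> vec_space.rank n A"
proof -
  have "inj_on \<rho> P"
  proof (rule inj_onI)
    fix p q assume p: "p \<in> P" and q: "q \<in> P" and same_row: "\<rho> p = \<rho> q"
    have "fst p = fst q \<and> snd p \<le> snd q"
      using entries[OF p p] entries[OF q p] same_row by (simp split: if_splits)
    moreover have "fst q = fst p \<and> snd q \<le> snd p"
      using entries[OF q q] entries[OF p q] same_row by (simp split: if_splits)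
    ultimately show "p = q" by (simp add: prod_eq_iff)
  qed
  moreover have "\<forall>q\<in>P. x q = 0"
    if sys: "\<forall>p\<in>P. (\<Sum>q\<in>P. A $$ (\<rho> p, \<gamma> q) * x q) = 0" for x
  proof
    fix q assume "q \<in> P"
    then obtain a b where q: "q = (a, b)" "a \<in> {1..m}" "b \<in> {1..m'}" unfolding P_def by auto
    have "(\<Sum>c=1..b'. x (a, c)) = 0" if b': "1 \<le> b'" "b' \<le> m'" for b'
    proof -
      have p: "(a, b') \<in> P" using q b' unfolding P_def by auto
      have row: "Pair a ` {1..b'} \<subseteq> P" using q(2) b'(2) unfolding P_def by auto
      have "(\<Sum>q\<in>P. A $$ (\<rho> (a, b'), \<gamma> q) * x q) = (\<Sum>q\<in>Pair a ` {1..b'}. x q)"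
      proof (rule sum.mono_neutral_cong_right)
        show "\<forall>q\<in>P - Pair a ` {1..b'}. A $$ (\<rho> (a, b'), \<gamma> q) * x q = 0"
          using entries[OF p] unfolding P_def by force
      qed (use P_def row entries[OF p] in auto)
      also have "\<dots> = (\<Sum>c=1..b'. x (a, c))"
        by (rule sum.reindex_cong[where l = "Pair a"]) (auto simp: inj_on_def)
      finally show ?thesis using sys p by simp
    qed
    then show "x q = 0" using prefix_sums_zero[of m' "\<lambda>c. x (a, c)" b] q by auto
  qed
  ultimately have "card P \<le> vec_space.rank n A"
    using rank_ge_nonsingular_subsystem[OF A _ _ \<rho> \<gamma>] unfolding P_def by blast
  then show ?thesis unfolding P_def by simp
qed

definition vedge :: "nat \<Rightarrow> nat \<Rightarrow> vert set" where "vedge i j = {U i j, U (Suc i) j}"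
definition hedge :: "nat \<Rightarrow> nat \<Rightarrow> vert set" where "hedge i j = {U i j, U i (Suc j)}"

lemma vedge_inj: "vedge i j = vedge i' j' \<longleftrightarrow> i = i' \<and> j = j'"
  unfolding vedge_def by (auto simp: doubleton_eq_iff)

lemma hedge_inj: "hedge i j = hedge i' j' \<longleftrightarrow> i = i' \<and> j = j'"
  unfolding hedge_def by (auto simp: doubleton_eq_iff)

lemma hedge_neq_vedge: "hedge i j \<noteq> vedge i' j'"
  unfolding vedge_def hedge_def by (auto simp: doubleton_eq_iff)

lemma vedge_in_grid: "vedge i j \<in> grid_edges k \<longleftrightarrow> 1 \<le> i \<and> i \<le> k - 1 \<and> 1 \<le> j \<and> j \<le> k"
  unfolding grid_edges_def vedge_def by (auto simp: doubleton_eq_iff)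

lemma hedge_in_grid: "hedge i j \<in> grid_edges k \<longleftrightarrow> 1 \<le> i \<and> i \<le> k \<and> 1 \<le> j \<and> j \<le> k - 1"
  unfolding grid_edges_def hedge_def by (auto simp: doubleton_eq_iff)

lemma vterm_in_grid: "{V j, U 1 j} \<in> grid_edges k \<longleftrightarrow> 1 \<le> j \<and> j \<le> k"
  unfolding grid_edges_def by (auto simp: doubleton_eq_iff)

lemma hterm_in_grid: "{H i, U i 1} \<in> grid_edges k \<longleftrightarrow> 1 \<le> i \<and> i \<le> k"
  unfolding grid_edges_def by (auto simp: doubleton_eq_iff)

lemma grid_edges_cases:
  assumes "e \<in> grid_edges k"
  obtains (vterm) j where "e = {V j, U 1 j}" "1 \<le> j" "j \<le> k"
  | (hterm) i where "e = {H i, U i 1}" "1 \<le> i" "i \<le> k"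
  | (vert) i j where "e = vedge i j" "1 \<le> i" "i \<le> k - 1" "1 \<le> j" "j \<le> k"
  | (horiz) i j where "e = hedge i j" "1 \<le> i" "i \<le> k" "1 \<le> j" "j \<le> k - 1"
  using assms unfolding grid_edges_def vedge_def hedge_def by blast

lemma cost_vterm: "grid_cost k {V j, U 1 j} = real k ^ 4"
  unfolding grid_cost_def by auto

lemma cost_hterm: "grid_cost k {H i, U i 1} = real k ^ 4"
  unfolding grid_cost_def by auto

lemma cost_vedge: "grid_cost k (vedge i j) = (if j = k then real k ^ 4 else 1)"
  unfolding grid_cost_def vedge_def by (auto simp: doubleton_eq_iff)

lemma cost_hedge: "grid_cost k (hedge i j) = (if i = k then real k ^ 4 else 1 - real j / real k ^ 4)"
proof -
  have "(THE x. \<exists>i' j'. {U i j, U i (Suc j)} = {U i' j', U i' (Suc j')}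
                  \<and> x = 1 - real j' / real k ^ 4) = 1 - real j / real k ^ 4"
    by (rule the_equality) (auto simp: doubleton_eq_iff)
  then show ?thesis unfolding grid_cost_def hedge_def by (auto simp: doubleton_eq_iff)
qed

lemma grid_cost_lower_bound:
  assumes k: "2 \<le> k" and e: "e \<in> grid_edges k"
  shows "1 - (real k - 1) / real k ^ 4 \<le> grid_cost k e"
proof -
  have le_unit: "1 - (real k - 1) / real k ^ 4 \<le> 1" using k by simp
  moreover have "1 \<le> real k ^ 4" using k by simp
  ultimately have le_heavy: "1 - (real k - 1) / real k ^ 4 \<le> real k ^ 4" by linarith
  from e show ?thesis
  proof (cases rule: grid_edges_cases)
    case (horiz i j)
    have "1 - (real k - 1) / real k ^ 4 \<le> 1 - real j / real k ^ 4"
      using horiz by (simp add: divide_right_mono)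
    then show ?thesis using horiz le_heavy by (simp add: cost_hedge)
  next
    case (vert i j)
    then show ?thesis using le_unit le_heavy by (simp add: cost_vedge)
  next
    case (vterm j)
    show ?thesis unfolding vterm(1) cost_vterm by (rule le_heavy)
  next
    case (hterm i)
    show ?thesis unfolding hterm(1) cost_hterm by (rule le_heavy)
  qed
qed

lemma light_cost_pos: "2 \<le> k \<Longrightarrow> 0 < 1 - (real k - 1) / real k ^ 4"
proof -
  assume k: "2 \<le> k"
  have "k \<le> k ^ 4" using k by (intro self_le_power) auto
  then have "real k \<le> real k ^ 4" by (metis of_nat_le_iff of_nat_power)
  then have "real k - 1 < real k ^ 4" by linarith
  then have "(real k - 1) / real k ^ 4 < 1" using k by (subst divide_less_eq_1_pos) simp_all
  then show ?thesis by simp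
qed

lemma grid_cost_nonneg: "2 \<le> k \<Longrightarrow> e \<in> grid_edges k \<Longrightarrow> 0 \<le> grid_cost k e"
  using grid_cost_lower_bound light_cost_pos by (meson less_le_trans less_imp_le)

lemma cutset_subset: "cutset k W \<subseteq> grid_edges k"
  unfolding cutset_def by blast

lemma finite_grid_edges: "finite (grid_edges k)"
proof -
  have "grid_edges k \<subseteq> (\<lambda>(x, y). {x, y}) ` (grid_vertices k \<times> grid_vertices k)"
  proof
    fix e assume "e \<in> grid_edges k"
    then show "e \<in> (\<lambda>(x, y). {x, y}) ` (grid_vertices k \<times> grid_vertices k)"
      by (cases rule: grid_edges_cases) (force simp: grid_vertices_def vedge_def hedge_def)+
  qed
  moreover have "finite (grid_vertices k)"
  proof (rule finite_subset)
    show "grid_vertices k \<subseteq> case_prod U ` ({1..k} \<times> {1..k}) \<union> V ` {1..k} \<union> H ` {1..k}"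
      unfolding grid_vertices_def by force
  qed simp
  ultimately show ?thesis by (meson finite_SigmaI finite_imageI finite_subset)
qed

lemma edge_cost_le_cut_cost:
  assumes k: "2 \<le> k" and e: "e \<in> cutset k W"
  shows "grid_cost k e \<le> cut_cost k W"
  unfolding cut_cost_def
proof (rule member_le_sum[OF e])
  show "finite (cutset k W)" using finite_subset[OF cutset_subset finite_grid_edges] .
  show "0 \<le> grid_cost k x" if "x \<in> cutset k W - {e}" for x
    using that cutset_subset grid_cost_nonneg[OF k] by blast
qed

lemma crosses_pair: "x \<noteq> y \<Longrightarrow> card ({x, y} \<inter> X) = 1 \<longleftrightarrow> (x \<in> X) \<noteq> (y \<in> X)"
  by (cases "x \<in> X"; cases "y \<in> X") auto

lemma vedge_cut: "vedge i j \<in> cutset k X \<longleftrightarrow>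
    vedge i j \<in> grid_edges k \<and> (U i j \<in> X) \<noteq> (U (Suc i) j \<in> X)"
  unfolding cutset_def using crosses_pair[of "U i j" "U (Suc i) j" X] by (simp add: vedge_def)

lemma hedge_cut: "hedge i j \<in> cutset k X \<longleftrightarrow>
    hedge i j \<in> grid_edges k \<and> (U i j \<in> X) \<noteq> (U i (Suc j) \<in> X)"
  unfolding cutset_def using crosses_pair[of "U i j" "U i (Suc j)" X] by (simp add: hedge_def)

lemma vterm_cut: "{V j, U 1 j} \<in> cutset k X \<longleftrightarrow>
    {V j, U 1 j} \<in> grid_edges k \<and> (V j \<in> X) \<noteq> (U 1 j \<in> X)"
  unfolding cutset_def using crosses_pair[of "V j" "U 1 j" X] by simp

lemma hterm_cut: "{H i, U i 1} \<in> cutset k X \<longleftrightarrow>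
    {H i, U i 1} \<in> grid_edges k \<and> (H i \<in> X) \<noteq> (U i 1 \<in> X)"
  unfolding cutset_def using crosses_pair[of "H i" "U i 1" X] by simp

text \<open>Both endpoints of a grid edge are grid vertices, so complementing the side of a
  cut inside the vertex set does not change its cutset.\<close>
lemma grid_edge_endpoints:
  assumes "e \<in> grid_edges k"
  obtains x y where "e = {x, y}" "x \<noteq> y" "x \<in> grid_vertices k" "y \<in> grid_vertices k"
  using assms
proof (cases rule: grid_edges_cases)
  case (vterm j)
  show ?thesis by (rule that[of "V j" "U 1 j"]) (use vterm in \<open>auto simp: grid_vertices_def\<close>)
next
  case (hterm i)
  show ?thesis by (rule that[of "H i" "U i 1"]) (use hterm in \<open>auto simp: grid_vertices_def\<close>)
next
  case (vert i j)
  show ?thesis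
    by (rule that[of "U i j" "U (Suc i) j"]) (use vert in \<open>auto simp: grid_vertices_def vedge_def\<close>)
next
  case (horiz i j)
  show ?thesis
    by (rule that[of "U i j" "U i (Suc j)"]) (use horiz in \<open>auto simp: grid_vertices_def hedge_def\<close>)
qed

lemma cutset_complement: "cutset k (grid_vertices k - W) = cutset k W"
proof -
  have "card (e \<inter> (grid_vertices k - W)) = 1 \<longleftrightarrow> card (e \<inter> W) = 1" if e: "e \<in> grid_edges k" for e
  proof -
    obtain x y where "e = {x, y}" "x \<noteq> y" "x \<in> grid_vertices k" "y \<in> grid_vertices k"
      using grid_edge_endpoints[OF e] by blast
    then show ?thesis using crosses_pair[of x y W] crosses_pair[of x y "grid_vertices k - W"] by simp
  qed
  then show ?thesis unfolding cutset_def by blast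
qed

lemma separating_side:
  assumes "separating k S W" "S \<subseteq> terminals k"
  obtains X where "X \<inter> terminals k = S" "cutset k X = cutset k W"
proof (cases "W \<inter> terminals k = S")
  case False
  then have "W \<inter> terminals k = terminals k - S" using assms(1) unfolding separating_def by blast
  moreover have "terminals k \<subseteq> grid_vertices k" unfolding terminals_def grid_vertices_def by blast
  ultimately have "(grid_vertices k - W) \<inter> terminals k = S" using assms(2) by blast
  then show ?thesis using that cutset_complement by blast
qed (use that in blast)

lemma chain_const:
  assumes "m \<le> n" "\<And>j. m \<le> j \<Longrightarrow> j < n \<Longrightarrow> f j = f (Suc j)"
  shows "f m = f n"
  using assms(1) by (induction n rule: dec_induct) (use assms(2) in auto)

lemma row_same_side:
  assumes "1 \<le> i" "i \<le> k" "1 \<le> m" "m \<le> n" "n \<le> k"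
    and uncut: "\<And>j. m \<le> j \<Longrightarrow> j < n \<Longrightarrow> hedge i j \<notin> cutset k X"
  shows "U i m \<in> X \<longleftrightarrow> U i n \<in> X"
proof (rule chain_const[where f = "\<lambda>j. U i j \<in> X"])
  fix j assume "m \<le> j" "j < n"
  then show "U i j \<in> X \<longleftrightarrow> U i (Suc j) \<in> X"
    using uncut[of j] assms(1-5) by (simp add: hedge_cut hedge_in_grid)
qed (rule assms(4))

lemma col_same_side:
  assumes "1 \<le> j" "j \<le> k" "1 \<le> m" "m \<le> n" "n \<le> k"
    and uncut: "\<And>i. m \<le> i \<Longrightarrow> i < n \<Longrightarrow> vedge i j \<notin> cutset k X"
  shows "U m j \<in> X \<longleftrightarrow> U n j \<in> X"
proof (rule chain_const[where f = "\<lambda>i. U i j \<in> X"])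
  fix i assume "m \<le> i" "i < n"
  then show "U i j \<in> X \<longleftrightarrow> U (Suc i) j \<in> X"
    using uncut[of i] assms(1-5) by (simp add: vedge_cut vedge_in_grid)
qed (rule assms(4))

lemma row_crossing:
  assumes "1 \<le> i" "i \<le> k" "1 \<le> m" "m \<le> n" "n \<le> k" "U i m \<in> X" "U i n \<notin> X"
  shows "\<exists>j. m \<le> j \<and> j < n \<and> hedge i j \<in> cutset k X"
  using row_same_side[of i k m n X] assms by blast

lemma col_crossing:
  assumes "1 \<le> j" "j \<le> k" "1 \<le> m" "m \<le> n" "n \<le> k" "U m j \<in> X" "U n j \<notin> X"
  shows "\<exists>i. m \<le> i \<and> i < n \<and> vedge i j \<in> cutset k X"
  using col_same_side[of j k m n X] assms by blast

definition corner_terminals :: "nat \<Rightarrow> nat \<Rightarrow> vert set" where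
  "corner_terminals a b = {H i | i. 1 \<le> i \<and> i \<le> a} \<union> {V j | j. 1 \<le> j \<and> j \<le> b}"

definition rectangle :: "nat \<Rightarrow> nat \<Rightarrow> vert set" where
  "rectangle a b = corner_terminals a b \<union> {U i j | i j. 1 \<le> i \<and> i \<le> a \<and> 1 \<le> j \<and> j \<le> b}"

definition staircase :: "nat \<Rightarrow> nat \<Rightarrow> (nat \<Rightarrow> nat) \<Rightarrow> (nat \<Rightarrow> nat) \<Rightarrow> vert set set" where
  "staircase a b hc vc = (\<lambda>i. hedge i (hc i)) ` {1..a} \<union> (\<lambda>j. vedge (vc j) j) ` {1..b}"

definition corner_cut :: "nat \<Rightarrow> nat \<Rightarrow> vert set set" where
  "corner_cut a b = staircase a b (\<lambda>_. b) (\<lambda>_. a)"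

lemma rectangle_mem [simp]:
  "U i j \<in> rectangle a b \<longleftrightarrow> 1 \<le> i \<and> i \<le> a \<and> 1 \<le> j \<and> j \<le> b"
  "V j \<in> rectangle a b \<longleftrightarrow> 1 \<le> j \<and> j \<le> b"
  "H i \<in> rectangle a b \<longleftrightarrow> 1 \<le> i \<and> i \<le> a"
  unfolding rectangle_def corner_terminals_def by blast+

lemma hedge_in_staircase: "hedge i j \<in> staircase a b hc vc \<longleftrightarrow> i \<in> {1..a} \<and> j = hc i"
  unfolding staircase_def by (auto simp: hedge_inj hedge_neq_vedge)

lemma vedge_in_staircase: "vedge i j \<in> staircase a b hc vc \<longleftrightarrow> j \<in> {1..b} \<and> i = vc j"
  unfolding staircase_def by (auto simp: vedge_inj hedge_neq_vedge[symmetric])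

lemma vedge_in_corner_cut: "vedge i j \<in> corner_cut a b \<longleftrightarrow> i = a \<and> 1 \<le> j \<and> j \<le> b"
  unfolding corner_cut_def vedge_in_staircase by auto

lemma corner_terminals_subset: "a \<le> k \<Longrightarrow> b \<le> k \<Longrightarrow> corner_terminals a b \<subseteq> terminals k"
  unfolding corner_terminals_def terminals_def by auto

lemma staircase_cost:
  assumes "a \<le> k - 1" "b \<le> k - 1"
  shows "(\<Sum>e\<in>staircase a b hc vc. grid_cost k e) = real b + (\<Sum>i=1..a. 1 - real (hc i) / real k ^ 4)"
proof -
  let ?R = "(\<lambda>i. hedge i (hc i)) ` {1..a}" and ?C = "(\<lambda>j. vedge (vc j) j) ` {1..b}"
  have inj_R: "inj_on (\<lambda>i. hedge i (hc i)) {1..a}" by (rule inj_onI) (simp add: hedge_inj)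
  have inj_C: "inj_on (\<lambda>j. vedge (vc j) j) {1..b}" by (rule inj_onI) (simp add: vedge_inj)
  have "?R \<inter> ?C = {}" using hedge_neq_vedge by blast
  then have "(\<Sum>e\<in>staircase a b hc vc. grid_cost k e) = (\<Sum>e\<in>?R. grid_cost k e) + (\<Sum>e\<in>?C. grid_cost k e)"
    unfolding staircase_def by (intro sum.union_disjoint) auto
  also have "(\<Sum>e\<in>?R. grid_cost k e) = (\<Sum>i=1..a. 1 - real (hc i) / real k ^ 4)"
    unfolding sum.reindex[OF inj_R] using assms(1) by (intro sum.cong) (auto simp: cost_hedge)
  also have "(\<Sum>e\<in>?C. grid_cost k e) = (\<Sum>j=1..b. 1)"
    unfolding sum.reindex[OF inj_C] using assms(2) by (intro sum.cong) (auto simp: cost_vedge)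
  finally show ?thesis by simp
qed

lemma rectangle_separating:
  assumes "a \<le> k" "b \<le> k"
  shows "separating k (corner_terminals a b) (rectangle a b)"
proof -
  have "rectangle a b \<subseteq> grid_vertices k"
    using assms unfolding rectangle_def corner_terminals_def grid_vertices_def by auto
  moreover have "rectangle a b \<inter> terminals k = corner_terminals a b"
    using corner_terminals_subset[OF assms] unfolding rectangle_def terminals_def by blast
  ultimately show ?thesis unfolding separating_def by blast
qed

lemma rectangle_cutset:
  assumes a: "1 \<le> a" "a \<le> k - 1" and b: "1 \<le> b" "b \<le> k - 1"
  shows "cutset k (rectangle a b) = corner_cut a b"
proof
  show "cutset k (rectangle a b) \<subseteq> corner_cut a b"
  proof
    fix e assume cut: "e \<in> cutset k (rectangle a b)"
    then have "e \<in> grid_edges k" using cutset_subset by blast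
    then show "e \<in> corner_cut a b"
    proof (cases rule: grid_edges_cases)
      case (vterm j)
      then show ?thesis using cut[unfolded vterm(1) vterm_cut] a by simp
    next
      case (hterm i)
      then show ?thesis using cut[unfolded hterm(1) hterm_cut] b by simp
    next
      case (vert i j)
      then show ?thesis using cut by (auto simp: vedge_cut corner_cut_def vedge_in_staircase)
    next
      case (horiz i j)
      then show ?thesis using cut by (auto simp: hedge_cut corner_cut_def hedge_in_staircase)
    qed
  qed
  show "corner_cut a b \<subseteq> cutset k (rectangle a b)"
    using a b unfolding corner_cut_def staircase_def
    by (auto simp: hedge_cut hedge_in_grid vedge_cut vedge_in_grid)
qed

lemma corner_cut_cost:
  assumes "1 \<le> a" "a \<le> k - 1" "1 \<le> b" "b \<le> k - 1"
  shows "cut_cost k (rectangle a b) = real b + real a * (1 - real b / real k ^ 4)"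
  unfolding cut_cost_def rectangle_cutset[OF assms] corner_cut_def staircase_cost[OF assms(2,4)]
  by simp

text \<open>Numerical heart of the uniqueness argument: a staircase plus one further edge is
  more expensive than the corner cut.\<close>
lemma extra_edge_too_expensive:
  fixes a b k :: nat
  assumes k: "2 \<le> k" and a: "a \<le> k - 1"
  shows "real a * (1 - real b / real k ^ 4) < (real a + 1) * (1 - (real k - 1) / real k ^ 4)"
proof -
  have "(a + 1) * (k - 1) \<le> k * k" using a k by (intro mult_mono) auto
  also have "k * k < k ^ 4"
    using k power_strict_increasing[of 2 4 k] by (simp add: power2_eq_square)
  finally have "real (a + 1) * real (k - 1) < real k ^ 4"
    by (metis of_nat_less_iff of_nat_mult of_nat_power)
  then have "(real a + 1) * (real k - 1) < real k ^ 4" using k by (simp add: of_nat_diff add.commute)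
  then have "(real a + 1) * (real k - 1) / real k ^ 4 < 1" using k by simp
  moreover have "real a * (1 - real b / real k ^ 4) \<le> real a"
    by (simp add: mult_left_le)
  moreover have "(real a + 1) * (1 - (real k - 1) / real k ^ 4)
      = real a + 1 - (real a + 1) * (real k - 1) / real k ^ 4"
    by (simp add: right_diff_distrib)
  ultimately show ?thesis by linarith
qed

locale cheap_cut =
  fixes k a b :: nat and X :: "vert set"
  assumes k: "2 \<le> k" and a: "1 \<le> a" "a \<le> k - 1" and b: "1 \<le> b" "b \<le> k - 1"
    and side: "X \<inter> terminals k = corner_terminals a b"
    and cheap: "cut_cost k X \<le> real b + real a * (1 - real b / real k ^ 4)"
begin

lemma V_side: "1 \<le> j \<Longrightarrow> j \<le> k \<Longrightarrow> V j \<in> X \<longleftrightarrow> j \<le> b"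
  using side unfolding terminals_def corner_terminals_def by blast

lemma H_side: "1 \<le> i \<Longrightarrow> i \<le> k \<Longrightarrow> H i \<in> X \<longleftrightarrow> i \<le> a"
  using side unfolding terminals_def corner_terminals_def by blast

text \<open>The whole cut is cheaper than a single heavy edge.\<close>
lemma heavy_uncut:
  assumes "e \<in> grid_edges k" "grid_cost k e = real k ^ 4"
  shows "e \<notin> cutset k X"
proof
  assume "e \<in> cutset k X"
  then have "real k ^ 4 \<le> cut_cost k X" using edge_cost_le_cut_cost[OF k] assms(2) by metis
  moreover have "real a * (1 - real b / real k ^ 4) \<le> real a" by (simp add: mult_left_le)
  moreover have "a + b < k ^ 4"
  proof -
    have "a + b < 2 * k" using a b k by linarith
    also have "2 * k \<le> k * k" using k by (intro mult_le_mono1)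
    also have "k * k \<le> k ^ 4" using k by (simp add: power2_eq_square[symmetric] power_increasing)
    finally show ?thesis .
  qed
  then have "real a + real b < real k ^ 4" by (metis of_nat_add of_nat_less_iff of_nat_power)
  ultimately show False using cheap by linarith
qed

text \<open>Heavy terminal edges and the heavy last row and column force the sides of the
  boundary vertices.\<close>
lemma first_row:
  assumes j: "1 \<le> j" "j \<le> k"
  shows "U 1 j \<in> X \<longleftrightarrow> j \<le> b"
proof -
  have "{V j, U 1 j} \<notin> cutset k X" using heavy_uncut vterm_in_grid cost_vterm j by blast
  then have "V j \<in> X \<longleftrightarrow> U 1 j \<in> X" using vterm_cut vterm_in_grid j by blast
  then show ?thesis using V_side j by blast
qed

lemma first_col:
  assumes i: "1 \<le> i" "i \<le> k"
  shows "U i 1 \<in> X \<longleftrightarrow> i \<le> a"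
proof -
  have "{H i, U i 1} \<notin> cutset k X" using heavy_uncut hterm_in_grid cost_hterm i by blast
  then have "H i \<in> X \<longleftrightarrow> U i 1 \<in> X" using hterm_cut hterm_in_grid i by blast
  then show ?thesis using H_side i by blast
qed

lemma last_col: "1 \<le> i \<Longrightarrow> i \<le> k \<Longrightarrow> U i k \<notin> X"
  using col_same_side[of k k 1 i X] heavy_uncut first_row[of k] k b
  by (simp add: vedge_in_grid cost_vedge)

lemma last_row: "1 \<le> j \<Longrightarrow> j \<le> k \<Longrightarrow> U k j \<notin> X"
  using row_same_side[of k k j k X] heavy_uncut last_col[of k] k
  by (simp add: hedge_in_grid cost_hedge)

lemma row_cut: "i \<in> {1..a} \<Longrightarrow> \<exists>j. 1 \<le> j \<and> j < k \<and> hedge i j \<in> cutset k X"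
  using row_crossing[of i k 1 k X] first_col[of i] last_col[of i] a k by auto

lemma col_cut: "j \<in> {1..b} \<Longrightarrow> \<exists>i. 1 \<le> i \<and> i < k \<and> vedge i j \<in> cutset k X"
  using col_crossing[of j k 1 k X] first_row[of j] last_row[of j] b k by auto

text \<open>A staircase inside the cutset already uses up the whole budget, so it is the cutset.\<close>
lemma staircase_is_cutset:
  assumes sub: "staircase a b hc vc \<subseteq> cutset k X" and hc: "\<forall>i\<in>{1..a}. hc i \<le> k - 1"
  shows "cutset k X = staircase a b hc vc"
proof (rule ccontr)
  let ?c = "1 - (real k - 1) / real k ^ 4"
  assume "cutset k X \<noteq> staircase a b hc vc"
  then obtain e where e: "e \<in> cutset k X - staircase a b hc vc" using sub by blast
  have fin: "finite (cutset k X)" using finite_subset[OF cutset_subset finite_grid_edges] .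
  have nonneg: "x \<in> cutset k X \<Longrightarrow> 0 \<le> grid_cost k x" for x
    using grid_cost_nonneg[OF k] cutset_subset by blast
  have "?c \<le> grid_cost k e" using e cutset_subset grid_cost_lower_bound[OF k] by blast
  also have "\<dots> \<le> (\<Sum>x\<in>cutset k X - staircase a b hc vc. grid_cost k x)"
    using e fin nonneg by (intro member_le_sum) auto
  finally have extra: "?c \<le> \<dots>" .
  have "real a * ?c = (\<Sum>i=1..a. ?c)" by simp
  also have "\<dots> \<le> (\<Sum>i=1..a. 1 - real (hc i) / real k ^ 4)"
  proof (rule sum_mono)
    fix i assume "i \<in> {1..a}"
    then have "real (hc i) \<le> real (k - 1)" using hc by simp
    also have "\<dots> = real k - 1" using k by (simp add: of_nat_diff)
    finally show "?c \<le> 1 - real (hc i) / real k ^ 4" by (simp add: divide_right_mono)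
  qed
  finally have stair: "real b + real a * ?c \<le> (\<Sum>x\<in>staircase a b hc vc. grid_cost k x)"
    using staircase_cost[OF a(2) b(2)] by simp
  have "cut_cost k X = (\<Sum>x\<in>cutset k X - staircase a b hc vc. grid_cost k x)
      + (\<Sum>x\<in>staircase a b hc vc. grid_cost k x)"
    unfolding cut_cost_def by (rule sum.subset_diff[OF sub fin])
  moreover have "(real a + 1) * ?c = real a * ?c + ?c" by (simp add: distrib_right)
  ultimately have "real b + (real a + 1) * ?c \<le> cut_cost k X" using extra stair by linarith
  then show False using cheap extra_edge_too_expensive[OF k a(2), of b] by linarith
qed

lemma cutset_is_staircase:
  obtains hc vc where "cutset k X = staircase a b hc vc" "\<forall>i\<in>{1..a}. 1 \<le> hc i \<and> hc i \<le> k - 1"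
proof -
  obtain hc where hc: "\<And>i. i \<in> {1..a} \<Longrightarrow> 1 \<le> hc i \<and> hc i < k \<and> hedge i (hc i) \<in> cutset k X"
    using row_cut by metis
  obtain vc where vc: "\<And>j. j \<in> {1..b} \<Longrightarrow> vedge (vc j) j \<in> cutset k X"
    using col_cut by metis
  have "staircase a b hc vc \<subseteq> cutset k X" using hc vc unfolding staircase_def by blast
  moreover have range: "\<forall>i\<in>{1..a}. 1 \<le> hc i \<and> hc i \<le> k - 1"
    using hc by fastforce
  ultimately have "cutset k X = staircase a b hc vc" using staircase_is_cutset by blast
  from this range show ?thesis by (rule that)
qed

end

locale staircase_cut = cheap_cut +
  fixes hc vc :: "nat \<Rightarrow> nat"
  assumes staircase: "cutset k X = staircase a b hc vc"
    and hc_range: "\<forall>i\<in>{1..a}. 1 \<le> hc i \<and> hc i \<le> k - 1"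
begin

text \<open>Column b+1 is not cut, so it lies outside X; row i must therefore be cut left of it.\<close>
lemma hc_le_b:
  assumes i: "i \<in> {1..a}"
  shows "hc i \<le> b"
proof (rule ccontr)
  assume "\<not> hc i \<le> b"
  then have "U i 1 \<in> X \<longleftrightarrow> U i (Suc b) \<in> X"
    using i a b by (intro row_same_side[of i k 1 "Suc b" X]) (auto simp: staircase hedge_in_staircase)
  moreover have "U 1 (Suc b) \<in> X \<longleftrightarrow> U i (Suc b) \<in> X"
    using i a b by (intro col_same_side[of "Suc b" k 1 i X]) (auto simp: staircase vedge_in_staircase)
  moreover have "U i 1 \<in> X" using first_col[of i] i a k by fastforce
  moreover have "U 1 (Suc b) \<notin> X" using first_row[of "Suc b"] b by simp
  ultimately show False by blast
qed

text \<open>A row cut left of column b would make the cut more expensive than the rectangle.\<close>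
lemma hc_eq_b:
  assumes i: "i \<in> {1..a}"
  shows "hc i = b"
proof (rule ccontr)
  assume "hc i \<noteq> b"
  then have "hc i < b" using hc_le_b[OF i] by simp
  have "(\<Sum>i'=1..a. 1 - real b / real k ^ 4) < (\<Sum>i'=1..a. 1 - real (hc i') / real k ^ 4)"
  proof (rule sum_strict_mono_ex1)
    show "\<forall>i'\<in>{1..a}. 1 - real b / real k ^ 4 \<le> 1 - real (hc i') / real k ^ 4"
      using hc_le_b by (simp add: divide_right_mono)
    show "\<exists>i'\<in>{1..a}. 1 - real b / real k ^ 4 < 1 - real (hc i') / real k ^ 4"
      using i \<open>hc i < b\<close> k by (intro bexI[of _ i]) (simp_all add: divide_strict_right_mono)
  qed simp
  then have "real b + real a * (1 - real b / real k ^ 4) < cut_cost k X"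
    using staircase_cost[OF a(2) b(2)] unfolding cut_cost_def staircase by simp
  then show False using cheap by simp
qed

text \<open>Row a lies in X up to column b, row a+1 is uncut and lies outside X; so every column
  j \<le> b is cut between rows a and a+1.\<close>
lemma vc_eq_a:
  assumes j: "j \<in> {1..b}"
  shows "vc j = a"
proof -
  have "U a 1 \<in> X \<longleftrightarrow> U a j \<in> X"
    using j a b hc_eq_b by (intro row_same_side[of a k 1 j X]) (auto simp: staircase hedge_in_staircase)
  moreover have "U (Suc a) 1 \<in> X \<longleftrightarrow> U (Suc a) j \<in> X"
    using j a b by (intro row_same_side[of "Suc a" k 1 j X]) (auto simp: staircase hedge_in_staircase)
  ultimately have "vedge a j \<in> cutset k X"
    using j a b first_col[of a] first_col[of "Suc a"] by (auto simp: vedge_cut vedge_in_grid)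
  then show ?thesis using j by (simp add: staircase vedge_in_staircase)
qed

lemma staircase_is_corner: "cutset k X = corner_cut a b"
  unfolding staircase corner_cut_def staircase_def using hc_eq_b vc_eq_a by simp

end

lemma (in cheap_cut) cutset_corner: "cutset k X = corner_cut a b"
proof -
  obtain hc vc where "cutset k X = staircase a b hc vc" "\<forall>i\<in>{1..a}. 1 \<le> hc i \<and> hc i \<le> k - 1"
    using cutset_is_staircase .
  then interpret staircase_cut k a b X hc vc by unfold_locales
  show ?thesis by (rule staircase_is_corner)
qed

lemma min_sep_cut_complement:
  assumes "S \<subseteq> terminals k"
  shows "min_sep_cut k (terminals k - S) W \<longleftrightarrow> min_sep_cut k S W"
proof -
  have "terminals k - (terminals k - S) = S" using assms by blast
  then have "separating k (terminals k - S) W' \<longleftrightarrow> separating k S W'" for W'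
    unfolding separating_def by auto
  then show ?thesis unfolding min_sep_cut_def by simp
qed

text \<open>Every minimum S_{a,b}-separating cut has the corner staircase as its cutset: after
  choosing the side containing S_{a,b}, it is no more expensive than the rectangle cut.\<close>
lemma min_cut_corner:
  assumes k: "2 \<le> k" and a: "1 \<le> a" "a \<le> k - 1" and b: "1 \<le> b" "b \<le> k - 1"
    and min: "min_sep_cut k (corner_terminals a b) W"
  shows "cutset k W = corner_cut a b"
proof -
  have "corner_terminals a b \<subseteq> terminals k" using corner_terminals_subset a b by simp
  then obtain X where X: "X \<inter> terminals k = corner_terminals a b" "cutset k X = cutset k W"
    using separating_side min unfolding min_sep_cut_def by blast
  have "cut_cost k X = cut_cost k W" unfolding cut_cost_def X(2) ..
  also have "\<dots> \<le> cut_cost k (rectangle a b)"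
    using min rectangle_separating a b unfolding min_sep_cut_def by simp
  also have "\<dots> = real b + real a * (1 - real b / real k ^ 4)" by (rule corner_cut_cost[OF a b])
  finally interpret cheap_cut k a b X using k a b X(1) by unfold_locales
  show ?thesis using cutset_corner X(2) by simp
qed

lemma corner_row:
  assumes k: "2 \<le> k" and enum: "bipartition_enum k Ss"
    and min: "\<forall>t < nparts k. min_sep_cut k (Ss t) (W t)"
    and a: "1 \<le> a" "a \<le> k - 1" and b: "1 \<le> b" "b \<le> k - 1"
  shows "\<exists>t < nparts k. cutset k (W t) = corner_cut a b"
proof -
  let ?S = "corner_terminals a b"
  have sub: "?S \<subseteq> terminals k" using corner_terminals_subset a b by simp
  moreover have "H 1 \<in> ?S" using a unfolding corner_terminals_def by blast
  moreover have "V k \<in> terminals k - ?S" using k b unfolding corner_terminals_def terminals_def by auto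
  ultimately obtain t where t: "t < nparts k" "Ss t = ?S \<or> Ss t = terminals k - ?S"
    using enum unfolding bipartition_enum_def by blast
  then have "min_sep_cut k ?S (W t)" using min min_sep_cut_complement[OF sub] by auto
  then show ?thesis using min_cut_corner[OF k a b] t(1) by blast
qed

lemma corner_rows:
  assumes k: "2 \<le> k" and enum: "bipartition_enum k Ss"
    and min: "\<forall>t < nparts k. min_sep_cut k (Ss t) (W t)"
  obtains \<rho> where "\<forall>p \<in> {1..k - 1} \<times> {1..k - 1}.
    \<rho> p < nparts k \<and> cutset k (W (\<rho> p)) = corner_cut (fst p) (snd p)"
proof -
  have "\<forall>p \<in> {1..k - 1} \<times> {1..k - 1}. \<exists>t. t < nparts k \<and> cutset k (W t) = corner_cut (fst p) (snd p)"
  proof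
    fix p assume "p \<in> {1..k - 1} \<times> {1..k - 1}"
    then obtain a b where "p = (a, b)" "1 \<le> a" "a \<le> k - 1" "1 \<le> b" "b \<le> k - 1" by auto
    then show "\<exists>t. t < nparts k \<and> cutset k (W t) = corner_cut (fst p) (snd p)"
      using corner_row[OF k enum min, of a b] by simp
  qed
  from bchoice[OF this] obtain \<rho> where "\<forall>p \<in> {1..k - 1} \<times> {1..k - 1}.
      \<rho> p < nparts k \<and> cutset k (W (\<rho> p)) = corner_cut (fst p) (snd p)" by blast
  then show ?thesis by (rule that)
qed

lemma vedge_columns:
  assumes "set es = grid_edges k"
  obtains \<gamma> where "\<forall>p \<in> {1..k - 1} \<times> {1..k - 1}. \<gamma> p < length es \<and> es ! \<gamma> p = vedge (fst p) (snd p)"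
    and "inj_on \<gamma> ({1..k - 1} \<times> {1..k - 1})"
proof -
  have "\<forall>p \<in> {1..k - 1} \<times> {1..k - 1}. \<exists>n. n < length es \<and> es ! n = vedge (fst p) (snd p)"
  proof
    fix p assume "p \<in> {1..k - 1} \<times> {1..k - 1}"
    then have "vedge (fst p) (snd p) \<in> set es" using assms by (auto simp: vedge_in_grid)
    then show "\<exists>n. n < length es \<and> es ! n = vedge (fst p) (snd p)" by (simp add: in_set_conv_nth)
  qed
  from bchoice[OF this] obtain \<gamma> where
    \<gamma>: "\<forall>p \<in> {1..k - 1} \<times> {1..k - 1}. \<gamma> p < length es \<and> es ! \<gamma> p = vedge (fst p) (snd p)" by blast
  moreover have "inj_on \<gamma> ({1..k - 1} \<times> {1..k - 1})"
    by (rule inj_onI) (metis \<gamma> vedge_inj prod_eq_iff)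
  ultimately show ?thesis by (rule that)
qed

theorem lemma3p8:
  fixes k :: nat and Ss W :: "nat \<Rightarrow> vert set" and es :: "vert set list"
  assumes "k \<ge> 3"
    and "bipartition_enum k Ss"
    and "distinct es" and "set es = grid_edges k"
    and "\<forall>t < nparts k. min_sep_cut k (Ss t) (W t)"
  shows "vec_space.rank (nparts k) (incidence_mat k W es) \<ge> (k - 1) ^ 2"
proof -
  define P where "P = {1..k - 1} \<times> {1..k - 1}"
  have k: "2 \<le> k" using assms(1) by simp
  obtain \<rho> where \<rho>: "\<forall>p\<in>P. \<rho> p < nparts k \<and> cutset k (W (\<rho> p)) = corner_cut (fst p) (snd p)"
    using corner_rows[OF k assms(2,5)] unfolding P_def by blast
  obtain \<gamma> where \<gamma>: "\<forall>p\<in>P. \<gamma> p < length es \<and> es ! \<gamma> p = vedge (fst p) (snd p)"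
    and inj: "inj_on \<gamma> P"
    using vedge_columns[OF assms(4)] unfolding P_def by blast
  text \<open>Entry (\<rho>(a,b), \<gamma>(a',b')) records whether u_{a',b'}u_{a'+1,b'} lies in the corner
    cut of (a,b).\<close>
  have entries: "incidence_mat k W es $$ (\<rho> p, \<gamma> q) = (if fst q = fst p \<and> snd q \<le> snd p then 1 else 0)"
    if "p \<in> P" "q \<in> P" for p q
  proof -
    have "incidence_mat k W es $$ (\<rho> p, \<gamma> q)
        = (if vedge (fst q) (snd q) \<in> corner_cut (fst p) (snd p) then 1 else 0)"
      using \<rho> \<gamma> that unfolding incidence_mat_def by simp
    then show ?thesis using that unfolding P_def by (auto simp: vedge_in_corner_cut)
  qed
  have "incidence_mat k W es \<in> carrier_mat (nparts k) (length es)" unfolding incidence_mat_def by simp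
  moreover have "\<rho> ` P \<subseteq> {..<nparts k}" "\<gamma> ` P \<subseteq> {..<length es}" using \<rho> \<gamma> by auto
  ultimately have "(k - 1) * (k - 1) \<le> vec_space.rank (nparts k) (incidence_mat k W es)"
    using rank_ge_triangular_blocks[of _ "nparts k" "length es" \<rho> "k - 1" "k - 1" \<gamma>] inj entries
    unfolding P_def by blast
  then show ?thesis by (simp add: power2_eq_square)
qed

end
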